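(* Let $\mathcal{C}$ be a non-attacking configuration with $e$ even Queens and $o$ odd Queens. Then there exists $N$ such that for all $n\ge N$, $$\mathrm{inloss}_n(\mathcal{C}) = \gamma(\mathcal{C}) - \eta_n(\mathcal{C}),$$ where $\gamma(\mathcal{C}) = 12\binom{e}{2} + 12\binom{o}{2} + 10\,e\,o$ and $\eta_n(\mathcal{C}) = \sum_{s\in A(\mathcal{C})\cap\mathcal{B}_n}\left[\binom{a_{\mathcal{C}}(s)}{2} - (a_{\mathcal{C}}(s)-1)\right]$.
   Context: For $n \in \mathbb{N}$ let $I_n = \{\lfloor (2-n)/2 \rfloor, \ldots, \lfloor n/2 \rfloor\}$ and $\mathcal{B}_n = I_n \times I_n$. A configuration is a finite set $\mathcal{C} \subset \mathbb{Z}\times\mathbb{Z}$. For $Q=(x,y)$, $A(Q) = \{(x+i,y),(x,y+i),(x+i,y+i),(x+i,y-i) : i \in \mathbb{Z}\setminus\{0\}\}$ and $A(\mathcal{C}) = \bigcup_{Q\in\mathcal{C}} A(Q)$. $\mathcal{C}$ is non-attacking if $Q'\notin A(Q)$ for all distinct $Q,Q'\in\mathcal{C}$. The attacking number is $a_{\mathcal{C}}(s) = \#\{Q \in \mathcal{C} : s \in A(Q)\}$ and $\mathrm{inloss}_n(\mathcal{C}) = \sum_{s \in A(\mathcal{C})\cap\mathcal{B}_n} (a_{\mathcal{C}}(s) - 1)$. A Queen at $(x_1,x_2)$ is even if $x_1-x_2\equiv 0 \pmod 2$ and odd otherwise. *)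

theory Defs
  imports Main
begin

type_synonym square = "int \<times> int"

definition I_int :: "nat \<Rightarrow> int set" where
  "I_int n = {(2 - int n) div 2 .. int n div 2}"

definition board :: "nat \<Rightarrow> square set" where
  "board n = I_int n \<times> I_int n"

definition attacks :: "square \<Rightarrow> square set" where
  "attacks Q = (case Q of (x, y) \<Rightarrow>
     {(x + i, y) | i. i \<noteq> 0} \<union> {(x, y + i) | i. i \<noteq> 0} \<union>
     {(x + i, y + i) | i. i \<noteq> 0} \<union> {(x + i, y - i) | i. i \<noteq> 0})"

definition attacked :: "square set \<Rightarrow> square set" where
  "attacked C = (\<Union>Q\<in>C. attacks Q)"

definition non_attacking :: "square set \<Rightarrow> bool" where
  "non_attacking C \<longleftrightarrow> (\<forall>Q\<in>C. \<forall>Q'\<in>C. Q \<noteq> Q' \<longrightarrow> Q' \<notin> attacks Q)"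

definition attacking_number :: "square set \<Rightarrow> square \<Rightarrow> nat" where
  "attacking_number C s = card {Q \<in> C. s \<in> attacks Q}"

definition inloss :: "nat \<Rightarrow> square set \<Rightarrow> int" where
  "inloss n C = (\<Sum>s\<in>attacked C \<inter> board n. int (attacking_number C s) - 1)"

definition even_queen :: "square \<Rightarrow> bool" where
  "even_queen Q \<longleftrightarrow> even (fst Q - snd Q)"

definition gamma :: "square set \<Rightarrow> int" where
  "gamma C = (let e = card {Q \<in> C. even_queen Q}; od = card {Q \<in> C. \<not> even_queen Q} in
     12 * int (e choose 2) + 12 * int (od choose 2) + 10 * int e * int od)"

definition eta :: "nat \<Rightarrow> square set \<Rightarrow> int" where
  "eta n C = (\<Sum>s\<in>attacked C \<inter> board n.
     int (attacking_number C s choose 2) - (int (attacking_number C s) - 1))"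

end

(*
  Both sides count the same thing: inloss_n C + eta_n C is the sum over attacked squares s of
  binom(a(s), 2), i.e. the number of pairs of Queens attacking a common square of the board.
  Two non-attacking Queens Q, Q' have no parallel lines in common, and each of the remaining
  twelve pairs (line of Q, line of Q') meets in one point, never Q or Q', and different pairs
  in different points. All of these are lattice points, except that the diagonal of one Queen
  meets the antidiagonal of the other in a half-integer point exactly when Q and Q' have
  different parity. So Q and Q' attack 12 common squares when they have the same parity and
  10 otherwise; once the board contains all these finitely many squares, summing over pairs
  gives gamma C.
*)
theory Submission
  imports Defs
begin

lemma sum_of_bool_distinct_pairs:
  assumes "finite C"
  shows "(\<Sum>Q\<in>C. \<Sum>Q'\<in>C - {Q}. of_bool (P Q \<and> R Q') :: int)
    = int (card {Q\<in>C. P Q}) * int (card {Q\<in>C. R Q}) - int (card {Q\<in>C. P Q \<and> R Q})"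
proof -
  have "(\<Sum>Q\<in>C. \<Sum>Q'\<in>C - {Q}. of_bool (P Q \<and> R Q') :: int)
      = (\<Sum>Q\<in>C. of_bool (P Q) * (\<Sum>Q'\<in>C. of_bool (R Q')) - of_bool (P Q \<and> R Q))"
    using assms
    by (intro sum.cong) (simp_all add: sum_diff1 sum_distrib_left of_bool_conj
        del: sum_of_bool_eq sum_mult_of_bool_eq sum_of_bool_mult_eq)
  also have "\<dots> = int (card {Q\<in>C. P Q}) * int (card {Q\<in>C. R Q}) - int (card {Q\<in>C. P Q \<and> R Q})"
    using assms by (simp add: sum_subtractf sum_distrib_right[symmetric] Int_def)
  finally show ?thesis .
qed

lemma sum_pairs_through_points:
  fixes A :: "'a \<Rightarrow> 'b set"
  assumes "finite C" "finite S"
  shows "(\<Sum>s\<in>S. int (card {Q\<in>C. s \<in> A Q}) * (int (card {Q\<in>C. s \<in> A Q}) - 1))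
    = (\<Sum>Q\<in>C. \<Sum>Q'\<in>C - {Q}. int (card (S \<inter> A Q \<inter> A Q')))"
proof -
  have "(\<Sum>s\<in>S. int (card {Q\<in>C. s \<in> A Q}) * (int (card {Q\<in>C. s \<in> A Q}) - 1))
      = (\<Sum>s\<in>S. \<Sum>Q\<in>C. \<Sum>Q'\<in>C - {Q}. of_bool (s \<in> A Q \<and> s \<in> A Q'))"
    by (simp only: sum_of_bool_distinct_pairs[OF assms(1)] conj_absorb) (simp add: algebra_simps)
  also have "\<dots> = (\<Sum>Q\<in>C. \<Sum>Q'\<in>C - {Q}. \<Sum>s\<in>S. of_bool (s \<in> A Q \<and> s \<in> A Q'))"
    by (subst sum.swap) (simp only: sum.swap[of _ S])
  also have "\<dots> = (\<Sum>Q\<in>C. \<Sum>Q'\<in>C - {Q}. int (card (S \<inter> A Q \<inter> A Q')))"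
    using assms(2) by (simp add: Collect_conj_eq Int_assoc)
  finally show ?thesis .
qed

lemma sum_distinct_pairs_by_class:
  fixes \<alpha> \<beta> :: int and C :: "'a set" and P :: "'a \<Rightarrow> bool"
  assumes "finite C"
  defines "e \<equiv> int (card {Q\<in>C. P Q})" and "d \<equiv> int (card {Q\<in>C. \<not> P Q})"
  shows "(\<Sum>Q\<in>C. \<Sum>Q'\<in>C - {Q}. if P Q = P Q' then \<alpha> else \<beta>)
    = \<alpha> * (e * (e - 1)) + \<alpha> * (d * (d - 1)) + 2 * \<beta> * e * d"
proof -
  have "(if P Q = P Q' then \<alpha> else \<beta>)
      = \<alpha> * of_bool (P Q \<and> P Q') + \<alpha> * of_bool (\<not> P Q \<and> \<not> P Q')
        + \<beta> * of_bool (P Q \<and> \<not> P Q') + \<beta> * of_bool (\<not> P Q \<and> P Q')" for Q Q'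
    by auto
  then have "(\<Sum>Q\<in>C. \<Sum>Q'\<in>C - {Q}. if P Q = P Q' then \<alpha> else \<beta>)
      = \<alpha> * (\<Sum>Q\<in>C. \<Sum>Q'\<in>C - {Q}. of_bool (P Q \<and> P Q'))
        + \<alpha> * (\<Sum>Q\<in>C. \<Sum>Q'\<in>C - {Q}. of_bool (\<not> P Q \<and> \<not> P Q'))
        + \<beta> * (\<Sum>Q\<in>C. \<Sum>Q'\<in>C - {Q}. of_bool (P Q \<and> \<not> P Q'))
        + \<beta> * (\<Sum>Q\<in>C. \<Sum>Q'\<in>C - {Q}. of_bool (\<not> P Q \<and> P Q'))"
    by (simp only: sum.distrib sum_distrib_left)
  also have "\<dots> = \<alpha> * (e * (e - 1)) + \<alpha> * (d * (d - 1)) + 2 * \<beta> * e * d"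
    unfolding e_def d_def sum_of_bool_distinct_pairs[OF assms(1)]
    by (simp add: algebra_simps)
  finally show ?thesis .
qed

lemma two_mult_choose_two_int: "2 * int (n choose 2) = int n * (int n - 1)"
  by (induction n) (simp_all add: numeral_2_eq_2 algebra_simps)

lemma int_div2_cases:
  fixes n :: int
  shows "even n \<longleftrightarrow> n = 2 * (n div 2)" and "n = 2 * (n div 2) \<or> n = 2 * (n div 2) + 1"
  by presburger+

lemma attacks_iff:
  "(a, b) \<in> attacks (x, y) \<longleftrightarrow>
     (a, b) \<noteq> (x, y) \<and> (b = y \<or> a = x \<or> a - b = x - y \<or> a + b = x + y)"
proof
  assume "(a, b) \<noteq> (x, y) \<and> (b = y \<or> a = x \<or> a - b = x - y \<or> a + b = x + y)"
  then consider "b = y" "a \<noteq> x" | "a = x" "b \<noteq> y" | "a - b = x - y" "a \<noteq> x" | "a + b = x + y" "a \<noteq> x"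
    by fastforce
  then show "(a, b) \<in> attacks (x, y)"
    by cases (simp_all add: attacks_def exI[of _ "a - x"] exI[of _ "b - y"])
qed (auto simp: attacks_def)

text \<open>The lattice points where a row, column, diagonal or antidiagonal through \<open>(x, y)\<close> meets a
  non-parallel line through \<open>(u, v)\<close>.\<close>

fun line_crossings :: "square \<Rightarrow> square \<Rightarrow> square list" where
  "line_crossings (x, y) (u, v) =
     [(u, y), (u - v + y, y), (u + v - y, y), (x, v), (x, x - u + v), (x, u + v - x),
      (x - y + v, v), (x + y - v, v), (u, u - x + y), (u, x + y - u)] @
     (let k = (x - y + u + v) div 2 in
      if even (x - y + u + v) then [(k, u + v - k), (k + y - v, x - k + v)] else [])"

lemma attacks_inter_eq_line_crossings:
  assumes "(u, v) \<notin> attacks (x, y)" "(u, v) \<noteq> (x, y)"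
  shows "attacks (x, y) \<inter> attacks (u, v) = set (line_crossings (x, y) (u, v))"
proof (intro set_eqI, clarify)
  fix a b
  \<comment> \<open>naming the half \<open>k\<close> keeps \<open>div\<close> out of the SMT problem\<close>
  define k where "k = (x - y + u + v) div 2"
  have "v \<noteq> y" "u \<noteq> x" "u - v \<noteq> x - y" "u + v \<noteq> x + y"
    using assms by (auto simp: attacks_iff)
  with int_div2_cases[of "x - y + u + v", folded k_def]
  show "(a, b) \<in> attacks (x, y) \<inter> attacks (u, v) \<longleftrightarrow> (a, b) \<in> set (line_crossings (x, y) (u, v))"
    unfolding Int_iff attacks_iff line_crossings.simps Let_def k_def[symmetric]
    by (simp only: append.simps list.set insert_iff empty_iff prod.inject split: if_split) (smt (z3))
qed

lemma distinct_line_crossings: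
  assumes "(u, v) \<notin> attacks (x, y)" "(u, v) \<noteq> (x, y)"
  shows "distinct (line_crossings (x, y) (u, v))"
proof -
  define k where "k = (x - y + u + v) div 2"
  have "v \<noteq> y" "u \<noteq> x" "u - v \<noteq> x - y" "u + v \<noteq> x + y"
    using assms by (auto simp: attacks_iff)
  with int_div2_cases[of "x - y + u + v", folded k_def]
  show ?thesis
    unfolding line_crossings.simps Let_def k_def[symmetric]
    by (simp only: append.simps distinct.simps list.set insert_iff empty_iff prod.inject
        split: if_split) (smt (z3))
qed

lemma card_attacks_inter:
  assumes "Q' \<notin> attacks Q" "Q' \<noteq> Q"
  shows "card (attacks Q \<inter> attacks Q') = (if even_queen Q = even_queen Q' then 12 else 10)"
proof -
  obtain x y u v where Q: "Q = (x, y)" and Q': "Q' = (u, v)"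
    by fastforce
  note assms' = assms[unfolded Q Q']
  have "card (attacks Q \<inter> attacks Q') = length (line_crossings (x, y) (u, v))"
    unfolding Q Q' attacks_inter_eq_line_crossings[OF assms']
    by (rule distinct_card[OF distinct_line_crossings[OF assms']])
  also have "\<dots> = (if even (x - y + u + v) then 12 else 10)"
    by (simp add: Let_def)
  also have "even (x - y + u + v) \<longleftrightarrow> even_queen Q = even_queen Q'"
    unfolding Q Q' even_queen_def by simp presburger
  finally show ?thesis .
qed

lemma finite_attacks_inter:
  assumes "Q' \<notin> attacks Q" "Q' \<noteq> Q"
  shows "finite (attacks Q \<inter> attacks Q')"
  using assms attacks_inter_eq_line_crossings[of "fst Q'" "snd Q'" "fst Q" "snd Q"] by simp

lemma non_attackingD:
  "non_attacking C \<Longrightarrow> Q \<in> C \<Longrightarrow> Q' \<in> C \<Longrightarrow> Q' \<noteq> Q \<Longrightarrow> Q' \<notin> attacks Q"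
  unfolding non_attacking_def by auto

definition doubly_attacked :: "square set \<Rightarrow> square set" where
  "doubly_attacked C = (\<Union>Q\<in>C. \<Union>Q'\<in>C - {Q}. attacks Q \<inter> attacks Q')"

lemma finite_doubly_attacked:
  assumes "finite C" "non_attacking C"
  shows "finite (doubly_attacked C)"
  unfolding doubly_attacked_def
proof (intro finite_UN_I finite_Diff assms(1))
  fix Q Q' assume "Q \<in> C" "Q' \<in> C - {Q}"
  with assms(2) show "finite (attacks Q \<inter> attacks Q')"
    by (simp add: finite_attacks_inter non_attackingD)
qed

lemma finite_board: "finite (board n)"
  by (simp add: board_def I_int_def)

lemma finite_subset_board:
  assumes "finite X"
  shows "\<exists>N. \<forall>n\<ge>N. X \<subseteq> board n"
proof -
  obtain m where m: "\<forall>p\<in>X. \<bar>fst p\<bar> + \<bar>snd p\<bar> \<le> m"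
    using bdd_above_finite[OF finite_imageI[OF assms, of "\<lambda>p. \<bar>fst p\<bar> + \<bar>snd p\<bar>"]]
    by (auto simp: bdd_above_def)
  have "X \<subseteq> board n" if "n \<ge> nat (2 * m + 2)" for n
  proof
    fix p assume "p \<in> X"
    with m that show "p \<in> board n"
      by (cases p) (fastforce simp: board_def I_int_def)
  qed
  then show ?thesis by blast
qed

lemma inloss_add_eta:
  "inloss n C + eta n C = (\<Sum>s\<in>attacked C \<inter> board n. int (attacking_number C s choose 2))"
  unfolding inloss_def eta_def by (simp add: sum.distrib[symmetric])

lemma gamma_eq_sum_distinct_pairs:
  assumes "finite C"
  shows "2 * gamma C
    = (\<Sum>Q\<in>C. \<Sum>Q'\<in>C - {Q}. if even_queen Q = even_queen Q' then 12 else 10)"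
proof -
  let ?e = "card {Q\<in>C. even_queen Q}" and ?d = "card {Q\<in>C. \<not> even_queen Q}"
  have "2 * gamma C
      = 12 * (2 * int (?e choose 2)) + 12 * (2 * int (?d choose 2)) + 2 * 10 * int ?e * int ?d"
    by (simp add: gamma_def Let_def algebra_simps)
  then show ?thesis
    unfolding sum_distinct_pairs_by_class[OF assms] two_mult_choose_two_int .
qed

lemma inloss_add_eta_eq_gamma:
  assumes "finite C" "non_attacking C" "doubly_attacked C \<subseteq> board n"
  shows "inloss n C + eta n C = gamma C"
proof -
  let ?S = "attacked C \<inter> board n" and ?a = "attacking_number C"
  have "2 * (inloss n C + eta n C) = (\<Sum>s\<in>?S. int (?a s) * (int (?a s) - 1))"
    unfolding inloss_add_eta sum_distrib_left two_mult_choose_two_int ..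
  also have "\<dots> = (\<Sum>Q\<in>C. \<Sum>Q'\<in>C - {Q}. int (card (?S \<inter> attacks Q \<inter> attacks Q')))"
    unfolding attacking_number_def using assms(1) finite_board
    by (intro sum_pairs_through_points) auto
  also have "\<dots> = (\<Sum>Q\<in>C. \<Sum>Q'\<in>C - {Q}. if even_queen Q = even_queen Q' then 12 else 10)"
  proof (intro sum.cong refl)
    fix Q Q' assume "Q \<in> C" "Q' \<in> C - {Q}"
    moreover from this assms(3) have "?S \<inter> attacks Q \<inter> attacks Q' = attacks Q \<inter> attacks Q'"
      unfolding doubly_attacked_def attacked_def by blast
    ultimately show "int (card (?S \<inter> attacks Q \<inter> attacks Q'))
        = (if even_queen Q = even_queen Q' then 12 else 10)"
      using assms(2) by (simp add: card_attacks_inter non_attackingD)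
  qed
  also have "\<dots> = 2 * gamma C"
    using gamma_eq_sum_distinct_pairs[OF assms(1)] by simp
  finally show ?thesis by simp
qed

theorem mainTheorem7:
  fixes C :: "(int \<times> int) set"
  assumes "finite C" and "non_attacking C"
  shows "\<exists>N. \<forall>n\<ge>N. inloss n C = gamma C - eta n C"
proof -
  obtain N where "\<forall>n\<ge>N. doubly_attacked C \<subseteq> board n"
    using finite_subset_board[OF finite_doubly_attacked[OF assms]] by blast
  with assms have "\<forall>n\<ge>N. inloss n C + eta n C = gamma C"
    by (simp add: inloss_add_eta_eq_gamma)
  then show ?thesis
    by (auto simp: algebra_simps)
qed

end
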